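(* Let $G$ be a vertex-weighted multigraph and $H$ a submultigraph of $G$. Assume: (a) $G$ is completely multipartite; (b) $\mathrm{wt}_G(v)\geq 2$ for every vertex $v$ of $G$; (c) whenever $\{v_1,\dots,v_s\}\subset V_H$ is a set of mutually non-adjacent vertices of $H$, we have $s\leq\#V_H-4$. Then there exists a vertex-weighted multigraph $G'$, obtained from $G$ by a finite (possibly empty) sequence of admissible contractions, such that $H$ is a spanning submultigraph of $G'$.
   Context: A vertex-weighted multigraph is $G=(V,E,r,\mathrm{wt})$ with $V$ a finite vertex set, $E$ a finite edge set, $r$ assigning to each edge an unordered pair of distinct vertices, $\mathrm{wt}:V\to\mathbb{Z}$. $\deg(v)$ is the number of edges incident to $v$. $G_1$ is a submultigraph of $G_2$ if there are injective $\phi:V_1\to V_2$, $\psi:E_1\to E_2$ with $r_2\circ\psi=\phi\circ r_1$ and $\mathrm{wt}_1\leq\mathrm{wt}_2\circ\phi$; spanning if $\phi$ is bijective. $G$ is completely multipartite if there is no triple of vertices $v_1,v_2,v_3$ with $\{v_1,v_2\}$ and $\{v_1,v_3\}$ non-adjacent but $\{v_2,v_3\}$ adjacent. For adjacent $v,w$, the contraction with respect to $\{v,w\}$ identifies $v,w$ to a vertex of weight $\mathrm{wt}(v)+\mathrm{wt}(w)$, deletes edges between $v$ and $w$, and keeps all other edges and weights. With $m$ the number of edges between $v,w$, the contraction is admissible if, for some labeling of the pair as $v,w$, there is an integer $0\leq l<m$ with: every vertex $x\notin\{v,w\}$ has $\deg(x)\geq 3$; $\mathrm{wt}(v)\geq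 l+1$, $\mathrm{wt}(w)\geq l+2$; $\deg(v)-m+l\geq 3$ and $\deg(w)-m+l\geq 3$. *)

theory Defs
  imports Main
begin

text \<open>Vertex-weighted multigraph: vertex set, edge set, endpoint map r (an unordered
pair of distinct vertices, represented as a two-element set), and integer weights.\<close>

record ('v, 'e) vwmg =
  verts :: "'v set"
  edges :: "'e set"
  ends  :: "'e \<Rightarrow> 'v set"
  wt    :: "'v \<Rightarrow> int"

definition multigraph :: "('v, 'e) vwmg \<Rightarrow> bool" where
  "multigraph G \<longleftrightarrow> finite (verts G) \<and> finite (edges G) \<and>
     (\<forall>e\<in>edges G. \<exists>x y. x \<in> verts G \<and> y \<in> verts G \<and> x \<noteq> y \<and> ends G e = {x, y})"

definition deg :: "('v, 'e) vwmg \<Rightarrow> 'v \<Rightarrow> nat" where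
  "deg G v = card {e \<in> edges G. v \<in> ends G e}"

definition edges_between :: "('v, 'e) vwmg \<Rightarrow> 'v \<Rightarrow> 'v \<Rightarrow> 'e set" where
  "edges_between G v w = {e \<in> edges G. ends G e = {v, w}}"

definition adjacent :: "('v, 'e) vwmg \<Rightarrow> 'v \<Rightarrow> 'v \<Rightarrow> bool" where
  "adjacent G v w \<longleftrightarrow> edges_between G v w \<noteq> {}"

definition completely_multipartite :: "('v, 'e) vwmg \<Rightarrow> bool" where
  "completely_multipartite G \<longleftrightarrow>
     \<not> (\<exists>v1\<in>verts G. \<exists>v2\<in>verts G. \<exists>v3\<in>verts G.
          \<not> adjacent G v1 v2 \<and> \<not> adjacent G v1 v3 \<and> adjacent G v2 v3)"

definition submultigraph_via ::
  "('a, 'b) vwmg \<Rightarrow> ('v, 'e) vwmg \<Rightarrow> ('a \<Rightarrow> 'v) \<Rightarrow> ('b \<Rightarrow> 'e) \<Rightarrow> bool" where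
  "submultigraph_via H G \<phi> \<psi> \<longleftrightarrow>
     inj_on \<phi> (verts H) \<and> \<phi> ` verts H \<subseteq> verts G \<and>
     inj_on \<psi> (edges H) \<and> \<psi> ` edges H \<subseteq> edges G \<and>
     (\<forall>e\<in>edges H. ends G (\<psi> e) = \<phi> ` ends H e) \<and>
     (\<forall>v\<in>verts H. wt H v \<le> wt G (\<phi> v))"

definition submultigraph :: "('a, 'b) vwmg \<Rightarrow> ('v, 'e) vwmg \<Rightarrow> bool" where
  "submultigraph H G \<longleftrightarrow> (\<exists>\<phi> \<psi>. submultigraph_via H G \<phi> \<psi>)"

definition spanning_submultigraph :: "('a, 'b) vwmg \<Rightarrow> ('v, 'e) vwmg \<Rightarrow> bool" where
  "spanning_submultigraph H G \<longleftrightarrow>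
     (\<exists>\<phi> \<psi>. submultigraph_via H G \<phi> \<psi> \<and> bij_betw \<phi> (verts H) (verts G))"

text \<open>Contraction with respect to adjacent v, w: the identified vertex is represented
 by v (the result is defined up to isomorphism; we pick this representative).\<close>

definition contract :: "('v, 'e) vwmg \<Rightarrow> 'v \<Rightarrow> 'v \<Rightarrow> ('v, 'e) vwmg" where
  "contract G v w =
     \<lparr> verts = verts G - {w},
       edges = edges G - edges_between G v w,
       ends = (\<lambda>e. (\<lambda>x. if x = w then v else x) ` ends G e),
       wt = (\<lambda>x. if x = v then wt G v + wt G w else wt G x) \<rparr>"

definition admissible_labeled :: "('v, 'e) vwmg \<Rightarrow> 'v \<Rightarrow> 'v \<Rightarrow> bool" where
  "admissible_labeled G v w \<longleftrightarrow>
     (let m = int (card (edges_between G v w)) in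
      \<exists>l::int. 0 \<le> l \<and> l < m \<and>
        (\<forall>x\<in>verts G. x \<notin> {v, w} \<longrightarrow> deg G x \<ge> 3) \<and>
        wt G v \<ge> l + 1 \<and> wt G w \<ge> l + 2 \<and>
        int (deg G v) - m + l \<ge> 3 \<and> int (deg G w) - m + l \<ge> 3)"

definition admissible_pair :: "('v, 'e) vwmg \<Rightarrow> 'v \<Rightarrow> 'v \<Rightarrow> bool" where
  "admissible_pair G v w \<longleftrightarrow> admissible_labeled G v w \<or> admissible_labeled G w v"

definition adm_contraction :: "('v, 'e) vwmg \<Rightarrow> ('v, 'e) vwmg \<Rightarrow> bool" where
  "adm_contraction G G' \<longleftrightarrow>
     (\<exists>v\<in>verts G. \<exists>w\<in>verts G. v \<noteq> w \<and> adjacent G v w \<and> admissible_pair G v w \<and>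
        G' = contract G v w)"

definition independent_set :: "('v, 'e) vwmg \<Rightarrow> 'v set \<Rightarrow> bool" where
  "independent_set G S \<longleftrightarrow> S \<subseteq> verts G \<and> (\<forall>x\<in>S. \<forall>y\<in>S. \<not> adjacent G x y)"

end

theory Submission
  imports Defs
begin

text \<open>
  Fix an embedding \<open>\<phi>\<close> of H into G. For a vertex z of G, the vertices a of H with
  \<open>\<phi> a\<close> not adjacent to z form an independent set of H, because in a completely
  multipartite graph the non-neighbours of z are pairwise non-adjacent. The independence
  bound therefore gives every vertex of G at least four neighbours in the image of \<open>\<phi>\<close>.
  Now take a vertex u outside the image and a neighbour x of u inside it, and contract
  \<open>{x, u}\<close> with \<open>l = 0\<close>: the weights are at least 2, and those four neighbours give every
  vertex degree at least 4 and x and u at least 3 edges besides the m edges joining them,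
  so the contraction is admissible. It keeps G completely multipartite (every vertex is
  adjacent to x or to u, so the merged vertex is adjacent to all others), keeps the
  embedding and the weight bound, and removes one vertex outside the image. Induction on
  the number of such vertices ends with \<open>\<phi>\<close> bijective.
\<close>

lemma adjacent_commute: "adjacent G a b \<longleftrightarrow> adjacent G b a"
  unfolding adjacent_def edges_between_def by (simp add: insert_commute)

lemma edges_between_commute: "edges_between G a b = edges_between G b a"
  unfolding edges_between_def by (simp add: insert_commute)

lemma multigraph_not_adjacent_self:
  assumes "multigraph G" shows "\<not> adjacent G a a"
proof
  assume "adjacent G a a"
  then obtain e where e: "e \<in> edges G" "ends G e = {a}"
    unfolding adjacent_def edges_between_def by auto
  with assms obtain x y where "x \<noteq> y" "ends G e = {x, y}" unfolding multigraph_def by blast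
  with e show False by auto
qed

lemma card_edges_between_add_card_neighbours_le_deg:
  assumes G: "multigraph G" and N: "finite N" "z \<notin> N" "w \<notin> N"
    and adj: "\<forall>y\<in>N. adjacent G z y"
  shows "card (edges_between G z w) + card N \<le> deg G z"
proof -
  define g where "g y = (SOME e. e \<in> edges_between G z y)" for y
  have g: "g y \<in> edges G" "ends G (g y) = {z, y}" if "y \<in> N" for y
    using adj that someI_ex[of "\<lambda>e. e \<in> edges_between G z y"]
    unfolding g_def adjacent_def edges_between_def by auto
  have inj: "inj_on g N"
  proof (rule inj_onI)
    fix a b assume "a \<in> N" "b \<in> N" "g a = g b"
    then have "{z, a} = {z, b}" using g by metis
    with \<open>a \<in> N\<close> \<open>b \<in> N\<close> N show "a = b" by (auto simp: doubleton_eq_iff)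
  qed
  have disj: "edges_between G z w \<inter> g ` N = {}"
    using g N by (fastforce simp: edges_between_def doubleton_eq_iff)
  have fin: "finite {e \<in> edges G. z \<in> ends G e}" using G unfolding multigraph_def by auto
  have sub: "edges_between G z w \<union> g ` N \<subseteq> {e \<in> edges G. z \<in> ends G e}"
    using g unfolding edges_between_def by auto
  have "card (edges_between G z w) + card N = card (edges_between G z w \<union> g ` N)"
    using disj inj N fin sub
    by (metis (no_types, lifting) card_Un_disjoint card_image finite_Un finite_subset)
  also have "\<dots> \<le> deg G z" unfolding deg_def using card_mono[OF fin sub] .
  finally show ?thesis .
qed

lemma submultigraph_via_adjacent:
  assumes "submultigraph_via H G \<phi> \<psi>" "adjacent H a b"
  shows "adjacent G (\<phi> a) (\<phi> b)"
proof -
  obtain e where "e \<in> edges H" "ends H e = {a, b}"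
    using assms(2) unfolding adjacent_def edges_between_def by auto
  then have "\<psi> e \<in> edges G" "ends G (\<psi> e) = {\<phi> a, \<phi> b}"
    using assms(1) unfolding submultigraph_via_def by auto
  then show ?thesis unfolding adjacent_def edges_between_def by auto
qed

lemma submultigraph_via_image_subset:
  "submultigraph_via H G \<phi> \<psi> \<Longrightarrow> \<phi> ` verts H \<subseteq> verts G"
  unfolding submultigraph_via_def by (elim conjE)

lemma completely_multipartite_adjacent_either:
  assumes "completely_multipartite G" "adjacent G x u" "x \<in> verts G" "u \<in> verts G"
    "b \<in> verts G"
  shows "adjacent G x b \<or> adjacent G u b"
  using assms adjacent_commute[of G x b] adjacent_commute[of G u b]
  unfolding completely_multipartite_def by blast

lemma independent_set_non_neighbours:
  assumes "completely_multipartite G" "submultigraph_via H G \<phi> \<psi>" "z \<in> verts G"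
  shows "independent_set H {a \<in> verts H. \<not> adjacent G z (\<phi> a)}"
  unfolding independent_set_def
proof (intro conjI ballI notI)
  fix a b
  assume a: "a \<in> {a \<in> verts H. \<not> adjacent G z (\<phi> a)}"
    and b: "b \<in> {a \<in> verts H. \<not> adjacent G z (\<phi> a)}" and ab: "adjacent H a b"
  from assms(2) ab have "adjacent G (\<phi> a) (\<phi> b)" by (rule submultigraph_via_adjacent)
  moreover have "\<phi> a \<in> verts G" "\<phi> b \<in> verts G"
    using a b submultigraph_via_image_subset[OF assms(2)] by auto
  ultimately show False
    using assms(1,3) a b unfolding completely_multipartite_def by blast
qed auto

lemma four_neighbours_in_image:
  assumes H: "multigraph H" and G: "multigraph G" and cm: "completely_multipartite G"
    and sv: "submultigraph_via H G \<phi> \<psi>"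
    and independence_bound: "\<forall>S. independent_set H S \<longrightarrow> int (card S) \<le> int (card (verts H)) - 4"
    and z: "z \<in> verts G"
  obtains N where "N \<subseteq> \<phi> ` verts H" "finite N" "4 \<le> card N" "z \<notin> N" "\<forall>y\<in>N. adjacent G z y"
proof -
  define S where "S = {a \<in> verts H. \<not> adjacent G z (\<phi> a)}"
  define T where "T = {a \<in> verts H. adjacent G z (\<phi> a)}"
  have finH: "finite (verts H)" using H unfolding multigraph_def by auto
  have "int (card S) \<le> int (card (verts H)) - 4"
    unfolding S_def by (rule independence_bound[rule_format, OF independent_set_non_neighbours[OF cm sv z]])
  moreover have "card S + card T = card (verts H)"
  proof -
    have "S \<union> T = verts H" "S \<inter> T = {}" unfolding S_def T_def by auto
    with finH show ?thesis by (metis card_Un_disjoint finite_Un)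
  qed
  ultimately have "4 \<le> card T" by linarith
  moreover have "inj_on \<phi> T"
    using sv unfolding submultigraph_via_def by (rule inj_on_subset[OF conjunct1]) (auto simp: T_def)
  moreover have "z \<notin> \<phi> ` T" using multigraph_not_adjacent_self[OF G] unfolding T_def by blast
  moreover have "finite T" "\<phi> ` T \<subseteq> \<phi> ` verts H" "\<forall>y\<in>\<phi> ` T. adjacent G z y"
    using finH unfolding T_def by auto
  ultimately show ?thesis using that[of "\<phi> ` T"] by (simp add: card_image)
qed

lemma deg_ge_edges_between_add_4:
  assumes "multigraph H" "multigraph G" "completely_multipartite G"
    and "submultigraph_via H G \<phi> \<psi>"
    and "\<forall>S. independent_set H S \<longrightarrow> int (card S) \<le> int (card (verts H)) - 4"
    and "z \<in> verts G" "w \<notin> \<phi> ` verts H"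
  shows "card (edges_between G z w) + 4 \<le> deg G z"
proof -
  obtain N where "N \<subseteq> \<phi> ` verts H" "finite N" "4 \<le> card N" "z \<notin> N" "\<forall>y\<in>N. adjacent G z y"
    using four_neighbours_in_image[OF assms(1-6)] .
  with assms(2,7) card_edges_between_add_card_neighbours_le_deg[of G N z w] show ?thesis
    by fastforce
qed

lemma admissible_labeled_with_zero:
  assumes "0 < card (edges_between G v w)" "1 \<le> wt G v" "2 \<le> wt G w"
    "card (edges_between G v w) + 3 \<le> deg G v" "card (edges_between G v w) + 3 \<le> deg G w"
    "\<forall>x\<in>verts G. x \<notin> {v, w} \<longrightarrow> 3 \<le> deg G x"
  shows "admissible_labeled G v w"
  unfolding admissible_labeled_def Let_def using assms by (intro exI[of _ 0]) auto

lemma contract_simps: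
  "verts (contract G v w) = verts G - {w}"
  "edges (contract G v w) = edges G - edges_between G v w"
  "ends (contract G v w) = (\<lambda>e. (\<lambda>x. if x = w then v else x) ` ends G e)"
  "wt (contract G v w) = (\<lambda>x. if x = v then wt G v + wt G w else wt G x)"
  unfolding contract_def by simp_all

lemma image_replace_absent: "u \<notin> A \<Longrightarrow> (\<lambda>y. if y = u then x else y) ` A = A"
  by (auto intro!: image_cong[of A A _ id, simplified])

lemma edges_between_contract:
  "e \<in> edges_between (contract G x u) a b \<longleftrightarrow>
    e \<in> edges G \<and> e \<notin> edges_between G x u \<and> (\<lambda>y. if y = u then x else y) ` ends G e = {a, b}"
  unfolding edges_between_def[of "contract G x u"] contract_simps by blast

lemma adjacent_contract_other:
  assumes "a \<notin> {x, u}" "b \<notin> {x, u}"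
  shows "adjacent (contract G x u) a b \<longleftrightarrow> adjacent G a b"
proof
  assume "adjacent (contract G x u) a b"
  then obtain e where "e \<in> edges_between (contract G x u) a b" unfolding adjacent_def by blast
  then have e: "e \<in> edges G" "(\<lambda>y. if y = u then x else y) ` ends G e = {a, b}"
    unfolding edges_between_contract by blast+
  have "u \<notin> ends G e"
  proof
    assume "u \<in> ends G e"
    then have "x \<in> (\<lambda>y. if y = u then x else y) ` ends G e" by (rule rev_image_eqI) simp
    with e(2) assms show False by (simp only:) blast
  qed
  from trans[OF sym[OF image_replace_absent[OF this]] e(2)] have "ends G e = {a, b}" .
  with e(1) have "e \<in> edges_between G a b" unfolding edges_between_def by blast
  then show "adjacent G a b" unfolding adjacent_def by blast
next
  assume "adjacent G a b"
  then obtain e where e: "e \<in> edges G" "ends G e = {a, b}"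
    unfolding adjacent_def edges_between_def by blast
  have "e \<notin> edges_between G x u"
    using e(2) assms unfolding edges_between_def by (simp add: doubleton_eq_iff)
  moreover have "u \<notin> ends G e" using e(2) assms by auto
  from trans[OF image_replace_absent[OF this] e(2)]
  have "(\<lambda>y. if y = u then x else y) ` ends G e = {a, b}" .
  ultimately have "e \<in> edges_between (contract G x u) a b"
    using e(1) unfolding edges_between_contract by blast
  then show "adjacent (contract G x u) a b" unfolding adjacent_def by blast
qed

lemma adjacent_contract_merged:
  assumes "a \<notin> {x, u}" "adjacent G x a \<or> adjacent G u a" "x \<noteq> u"
  shows "adjacent (contract G x u) x a"
proof -
  obtain e where e: "e \<in> edges G" "ends G e = {x, a} \<or> ends G e = {u, a}"
    using assms(2) unfolding adjacent_def edges_between_def by blast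
  have "e \<notin> edges_between G x u"
    using e(2) assms unfolding edges_between_def by (auto simp: doubleton_eq_iff)
  moreover have "(\<lambda>y. if y = u then x else y) ` ends G e = {x, a}"
    using e(2) assms by (elim disjE) (auto simp: insert_commute)
  ultimately have "e \<in> edges_between (contract G x u) x a" using e unfolding edges_between_contract by blast
  then show ?thesis unfolding adjacent_def by blast
qed

lemma multigraph_contract:
  assumes G: "multigraph G" and "x \<in> verts G" "x \<noteq> u"
  shows "multigraph (contract G x u)"
  unfolding multigraph_def
proof (intro conjI ballI)
  show "finite (verts (contract G x u))" "finite (edges (contract G x u))"
    using G unfolding multigraph_def contract_simps by blast+
  fix e assume "e \<in> edges (contract G x u)"
  then have e: "e \<in> edges G" "e \<notin> edges_between G x u" unfolding contract_simps by blast+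
  then obtain p q where pq: "p \<in> verts G" "q \<in> verts G" "p \<noteq> q" "ends G e = {p, q}"
    using G unfolding multigraph_def by blast
  let ?f = "\<lambda>y. if y = u then x else y"
  have "{p, q} \<noteq> {x, u}" using e pq(4) unfolding edges_between_def by blast
  then have "?f p \<noteq> ?f q" using pq(3) assms(3) by (auto simp: doubleton_eq_iff)
  moreover have "?f p \<in> verts (contract G x u)" "?f q \<in> verts (contract G x u)"
    using pq assms unfolding contract_simps by auto
  moreover have "ends (contract G x u) e = {?f p, ?f q}" unfolding contract_simps pq(4) by simp
  ultimately show "\<exists>a b. a \<in> verts (contract G x u) \<and> b \<in> verts (contract G x u) \<and>
      a \<noteq> b \<and> ends (contract G x u) e = {a, b}"
    by blast
qed

lemma completely_multipartite_contract:
  assumes cm: "completely_multipartite G" and adj: "adjacent G x u"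
    and x: "x \<in> verts G" and u: "u \<in> verts G" and "x \<noteq> u"
  shows "completely_multipartite (contract G x u)"
  unfolding completely_multipartite_def
proof (intro notI, elim bexE conjE)
  let ?G' = "contract G x u"
  have merged: "adjacent ?G' x b" if "b \<in> verts ?G'" "b \<noteq> x" for b
    using that completely_multipartite_adjacent_either[OF cm adj x u, of b]
      adjacent_contract_merged[of b x u G] \<open>x \<noteq> u\<close>
    unfolding contract_simps by blast
  fix v1 v2 v3 assume v: "v1 \<in> verts ?G'" "v2 \<in> verts ?G'" "v3 \<in> verts ?G'"
    and n12: "\<not> adjacent ?G' v1 v2" and n13: "\<not> adjacent ?G' v1 v3" and a23: "adjacent ?G' v2 v3"
  have "v1 \<noteq> v2" "v1 \<noteq> v3" using n12 n13 a23 adjacent_commute[of ?G' v2 v3] by auto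
  then have "v1 \<noteq> x" "v2 \<noteq> x" "v3 \<noteq> x"
    using merged v n12 n13 adjacent_commute[of ?G' v1] by metis+
  then have "v1 \<notin> {x, u}" "v2 \<notin> {x, u}" "v3 \<notin> {x, u}" using v unfolding contract_simps by auto
  then have "\<not> adjacent G v1 v2" "\<not> adjacent G v1 v3" "adjacent G v2 v3"
    using n12 n13 a23 by (simp_all add: adjacent_contract_other)
  moreover have "v1 \<in> verts G" "v2 \<in> verts G" "v3 \<in> verts G" using v unfolding contract_simps by auto
  ultimately show False using cm unfolding completely_multipartite_def by blast
qed

lemma submultigraph_via_contract:
  assumes sv: "submultigraph_via H G \<phi> \<psi>" and H: "multigraph H"
    and u: "u \<notin> \<phi> ` verts H" and "0 \<le> wt G u"
  shows "submultigraph_via H (contract G x u) \<phi> \<psi>"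
proof -
  have kept: "\<psi> e \<in> edges (contract G x u) \<and> ends (contract G x u) (\<psi> e) = \<phi> ` ends H e"
    if "e \<in> edges H" for e
  proof -
    have e: "\<psi> e \<in> edges G" "ends G (\<psi> e) = \<phi> ` ends H e"
      using sv that unfolding submultigraph_via_def by blast+
    have "ends H e \<subseteq> verts H" using H that unfolding multigraph_def by fastforce
    then have "u \<notin> ends G (\<psi> e)" using u e(2) by blast
    then have "ends (contract G x u) (\<psi> e) = ends G (\<psi> e)"
      unfolding contract_simps by (rule image_replace_absent)
    moreover have "\<psi> e \<notin> edges_between G x u"
      using \<open>u \<notin> ends G (\<psi> e)\<close> unfolding edges_between_def by blast
    ultimately show ?thesis using e unfolding contract_simps by blast
  qed
  moreover have "wt H v \<le> wt (contract G x u) (\<phi> v)" if "v \<in> verts H" for v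
  proof -
    have "wt H v \<le> wt G (\<phi> v)" using sv that unfolding submultigraph_via_def by blast
    with \<open>0 \<le> wt G u\<close> show ?thesis unfolding contract_simps by (cases "\<phi> v = x") auto
  qed
  moreover have "\<phi> ` verts H \<subseteq> verts (contract G x u)"
    using submultigraph_via_image_subset[OF sv] u unfolding contract_simps by blast
  ultimately show ?thesis using sv unfolding submultigraph_via_def by (simp add: image_subset_iff)
qed

lemma admissible_contraction_outside_image:
  assumes H: "multigraph H" and G: "multigraph G" and cm: "completely_multipartite G"
    and sv: "submultigraph_via H G \<phi> \<psi>" and wt: "\<forall>v\<in>verts G. 2 \<le> wt G v"
    and independence_bound: "\<forall>S. independent_set H S \<longrightarrow> int (card S) \<le> int (card (verts H)) - 4"
    and u: "u \<in> verts G" "u \<notin> \<phi> ` verts H"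
  obtains G' where "adm_contraction G G'" "multigraph G'" "completely_multipartite G'"
    "submultigraph_via H G' \<phi> \<psi>" "\<forall>v\<in>verts G'. 2 \<le> wt G' v" "verts G' = verts G - {u}"
proof -
  note deg_bound = deg_ge_edges_between_add_4[OF H G cm sv independence_bound]
  obtain N where N: "N \<subseteq> \<phi> ` verts H" "finite N" "4 \<le> card N" "u \<notin> N" "\<forall>y\<in>N. adjacent G u y"
    using four_neighbours_in_image[OF H G cm sv independence_bound u(1)] .
  then obtain x where x: "x \<in> N" by fastforce
  have xG: "x \<in> verts G" using x N(1) submultigraph_via_image_subset[OF sv] by blast
  have "x \<noteq> u" using x N(4) by blast
  have adj: "adjacent G x u" using N(5) x adjacent_commute[of G u x] by blast
  define m where "m = card (edges_between G x u)"
  have "finite (edges_between G x u)" using G unfolding multigraph_def edges_between_def by simp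
  with adj have "0 < m" unfolding m_def adjacent_def by (simp add: card_gt_0_iff)
  have "3 \<le> card (N - {x})" using N(2,3) x by (simp add: card_Diff_singleton)
  moreover have "card (edges_between G u x) + card (N - {x}) \<le> deg G u"
    using N x by (intro card_edges_between_add_card_neighbours_le_deg[OF G]) auto
  ultimately have "m + 3 \<le> deg G u" unfolding m_def edges_between_commute[of G x u] by linarith
  moreover have "m + 3 \<le> deg G x" using deg_bound[OF xG u(2)] unfolding m_def by simp
  moreover have "\<forall>y\<in>verts G. y \<notin> {x, u} \<longrightarrow> 3 \<le> deg G y" using deg_bound[OF _ u(2)] by fastforce
  moreover have wxu: "1 \<le> wt G x" "2 \<le> wt G u" using wt xG u(1) by auto
  ultimately have "admissible_labeled G x u"
    using \<open>0 < m\<close> unfolding m_def by (intro admissible_labeled_with_zero)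
  then have "adm_contraction G (contract G x u)"
    unfolding adm_contraction_def admissible_pair_def using xG u(1) \<open>x \<noteq> u\<close> adj by blast
  moreover have "\<forall>v\<in>verts (contract G x u). 2 \<le> wt (contract G x u) v"
  proof
    fix v assume "v \<in> verts (contract G x u)"
    with wt wxu show "2 \<le> wt (contract G x u) v"
      unfolding contract_simps by (cases "v = x") auto
  qed
  moreover have "0 \<le> wt G u" using wxu by simp
  ultimately show ?thesis
    using multigraph_contract[OF G xG \<open>x \<noteq> u\<close>]
      completely_multipartite_contract[OF cm adj xG u(1) \<open>x \<noteq> u\<close>]
      submultigraph_via_contract[OF sv H u(2)]
    by (intro that[of "contract G x u"]) (simp_all add: contract_simps(1))
qed

lemma spanning_submultigraph_if_image_covers:
  assumes "submultigraph_via H G \<phi> \<psi>" "verts G \<subseteq> \<phi> ` verts H"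
  shows "spanning_submultigraph H G"
  using assms unfolding spanning_submultigraph_def submultigraph_via_def bij_betw_def
  by (metis subset_antisym)

lemma adm_contractions_to_spanning:
  assumes H: "multigraph H"
    and independence_bound: "\<forall>S. independent_set H S \<longrightarrow> int (card S) \<le> int (card (verts H)) - 4"
    and "multigraph G" "completely_multipartite G" "submultigraph_via H G \<phi> \<psi>"
    "\<forall>v\<in>verts G. 2 \<le> wt G v"
  shows "\<exists>G'. adm_contraction\<^sup>*\<^sup>* G G' \<and> spanning_submultigraph H G'"
  using assms(3-)
proof (induction "card (verts G - \<phi> ` verts H)" arbitrary: G rule: less_induct)
  case (less G)
  show ?case
  proof (cases "verts G \<subseteq> \<phi> ` verts H")
    case True
    then show ?thesis using less.prems spanning_submultigraph_if_image_covers by blast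
  next
    case False
    then obtain u where u: "u \<in> verts G" "u \<notin> \<phi> ` verts H" by blast
    obtain G1 where G1: "adm_contraction G G1" "multigraph G1" "completely_multipartite G1"
      "submultigraph_via H G1 \<phi> \<psi>" "\<forall>v\<in>verts G1. 2 \<le> wt G1 v" "verts G1 = verts G - {u}"
      using admissible_contraction_outside_image[OF H less.prems independence_bound u] .
    have "verts G1 - \<phi> ` verts H = (verts G - \<phi> ` verts H) - {u}" using G1(6) by blast
    moreover have "finite (verts G - \<phi> ` verts H)" using less.prems(1) unfolding multigraph_def by blast
    ultimately have "card (verts G1 - \<phi> ` verts H) < card (verts G - \<phi> ` verts H)"
      using u card_Diff1_less by fastforce
    then show ?thesis using less.hyps G1 by (meson converse_rtranclp_into_rtranclp)
  qed
qed

theorem lemma3p6: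
  fixes G :: "('v, 'e) vwmg" and H :: "('a, 'b) vwmg"
  assumes "multigraph G" and "multigraph H"
    and "submultigraph H G"
    and "completely_multipartite G"
    and "\<forall>v\<in>verts G. wt G v \<ge> 2"
    and "\<forall>S. independent_set H S \<longrightarrow> int (card S) \<le> int (card (verts H)) - 4"
  shows "\<exists>G'. adm_contraction\<^sup>*\<^sup>* G G' \<and> spanning_submultigraph H G'"
proof -
  obtain \<phi> \<psi> where "submultigraph_via H G \<phi> \<psi>"
    using assms(3) unfolding submultigraph_def by blast
  then show ?thesis using adm_contractions_to_spanning[OF assms(2,6,1,4)] assms(5) by blast
qed

end
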